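(* Let $(\mathcal E,B)$ be a product system (with unitaries $B_{s,t}:\mathcal E_{s+t}\to\mathcal E_s\otimes\mathcal E_t$) and let $F=(F_t)_{t>0}$ be an inclusion subsystem of $(\mathcal E,B)$. For $t>0$ set $$\tilde F_t=\overline{\mathrm{span}}\{x\otimes y: x\in\mathcal E_r\ominus F_r,\ y\in\mathcal E_{t-r}\ominus F_{t-r}\text{ for some }0<r<t\}\subset\mathcal E_t$$ (using $\mathcal E_t\cong\mathcal E_r\otimes\mathcal E_{t-r}$ via $B_{r,t-r}$) and $F'_t=\mathcal E_t\ominus\tilde F_t$. Then $(F'_t,B_{s,t}|_{F'_{s+t}})$ is an inclusion system, i.e. $B_{s,t}(F'_{s+t})\subset F'_s\otimes F'_t$ for all $s,t>0$.
   Context: A product system is a measurable family of separable Hilbert spaces $(\mathcal E_t)_{t>0}$ with unitaries $B_{s,t}:\mathcal E_{s+t}\to\mathcal E_s\otimes\mathcal E_t$ satisfying $(B_{r,s}\otimes 1)B_{r+s,t}=(1\otimes B_{s,t})B_{r,s+t}$. An inclusion system is a family of Hilbert spaces $E_t$ with isometries $\beta_{s,t}:E_{s+t}\to E_s\otimes E_t$ satisfying the same associativity relation. An inclusion subsystem of $(\mathcal E,B)$ is a family of closed subspaces $F_t\subset\mathcal E_t$ with $B_{s,t}(F_{s+t})\subset F_s\otimes F_t$ for all $s,t>0$. *)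

theory Defs
  imports "HOL-Analysis.Analysis"
begin

text \<open>Concrete model of separable complex Hilbert spaces: every separable Hilbert space
is unitarily equivalent to l2(I) for a countable index set I.  The Hilbert tensor
product l2(I) (x) l2(J) is l2(I x J), with elementary tensors x (x) y = (i,j) |-> x i * y j.\<close>

definition l2 :: "'a set \<Rightarrow> ('a \<Rightarrow> complex) set" where
  "l2 I = {f. (\<forall>i. i \<notin> I \<longrightarrow> f i = 0) \<and> (\<lambda>i. (cmod (f i))\<^sup>2) summable_on UNIV}"

definition l2_inner :: "('a \<Rightarrow> complex) \<Rightarrow> ('a \<Rightarrow> complex) \<Rightarrow> complex" where
  "l2_inner f g = (\<Sum>\<^sub>\<infinity>i. cnj (f i) * g i)"

definition l2_dist :: "('a \<Rightarrow> complex) \<Rightarrow> ('a \<Rightarrow> complex) \<Rightarrow> real" where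
  "l2_dist f g = sqrt (\<Sum>\<^sub>\<infinity>i. (cmod (f i - g i))\<^sup>2)"

definition closed_subspace :: "'a set \<Rightarrow> ('a \<Rightarrow> complex) set \<Rightarrow> bool" where
  "closed_subspace I V \<longleftrightarrow> V \<subseteq> l2 I \<and> (\<lambda>_. 0) \<in> V
     \<and> (\<forall>f\<in>V. \<forall>g\<in>V. (\<lambda>i. f i + g i) \<in> V) \<and> (\<forall>c::complex. \<forall>f\<in>V. (\<lambda>i. c * f i) \<in> V)
     \<and> (\<forall>X f. (\<forall>n. X n \<in> V) \<and> f \<in> l2 I \<and> (\<lambda>n. l2_dist (X n) f) \<longlonglongrightarrow> 0 \<longrightarrow> f \<in> V)"

definition cspan :: "'a set \<Rightarrow> ('a \<Rightarrow> complex) set \<Rightarrow> ('a \<Rightarrow> complex) set" where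
  "cspan I S = \<Inter>{V. closed_subspace I V \<and> S \<subseteq> V}"

definition ocomp :: "'a set \<Rightarrow> ('a \<Rightarrow> complex) set \<Rightarrow> ('a \<Rightarrow> complex) set" where
  "ocomp I W = {x \<in> l2 I. \<forall>y\<in>W. l2_inner y x = 0}"

definition tens :: "('a \<Rightarrow> complex) \<Rightarrow> ('b \<Rightarrow> complex) \<Rightarrow> ('a \<times> 'b \<Rightarrow> complex)" where
  "tens x y = (\<lambda>(i, j). x i * y j)"

definition tensor_sub :: "'a set \<Rightarrow> 'b set \<Rightarrow> ('a \<Rightarrow> complex) set \<Rightarrow> ('b \<Rightarrow> complex) set
    \<Rightarrow> ('a \<times> 'b \<Rightarrow> complex) set" where
  "tensor_sub I J V W = cspan (I \<times> J) {tens x y | x y. x \<in> V \<and> y \<in> W}"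

definition unitary_l2 :: "'a set \<Rightarrow> 'b set \<Rightarrow> (('a \<Rightarrow> complex) \<Rightarrow> ('b \<Rightarrow> complex)) \<Rightarrow> bool" where
  "unitary_l2 I J U \<longleftrightarrow> U ` l2 I = l2 J
     \<and> (\<forall>f\<in>l2 I. \<forall>g\<in>l2 I. U (\<lambda>i. f i + g i) = (\<lambda>j. U f j + U g j))
     \<and> (\<forall>c::complex. \<forall>f\<in>l2 I. U (\<lambda>i. c * f i) = (\<lambda>j. c * U f j))
     \<and> (\<forall>f\<in>l2 I. \<forall>g\<in>l2 I. l2_inner (U f) (U g) = l2_inner f g)"

text \<open>Operators  U (x) 1  and  1 (x) U  on l2(I x L), resp. l2(L x I), acting slice-wise.\<close>
definition tens_left :: "(('a \<Rightarrow> complex) \<Rightarrow> ('b \<Rightarrow> complex)) \<Rightarrow> ('a \<times> 'c \<Rightarrow> complex) \<Rightarrow> ('b \<times> 'c \<Rightarrow> complex)" where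
  "tens_left U f = (\<lambda>(j, l). U (\<lambda>i. f (i, l)) j)"

definition tens_right :: "(('a \<Rightarrow> complex) \<Rightarrow> ('b \<Rightarrow> complex)) \<Rightarrow> ('c \<times> 'a \<Rightarrow> complex) \<Rightarrow> ('c \<times> 'b \<Rightarrow> complex)" where
  "tens_right U f = (\<lambda>(l, j). U (\<lambda>i. f (l, i)) j)"

text \<open>Product system (up to the measurability requirement): E_t = l2(I t) with I t countable,
unitaries B s t : E_(s+t) -> E_s (x) E_t = l2(I s x I t), associative up to the canonical
reassociation of coordinates.\<close>
definition product_system :: "(real \<Rightarrow> 'a set) \<Rightarrow> (real \<Rightarrow> real \<Rightarrow> ('a \<Rightarrow> complex) \<Rightarrow> ('a \<times> 'a \<Rightarrow> complex)) \<Rightarrow> bool" where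
  "product_system I B \<longleftrightarrow>
     (\<forall>t>0. countable (I t))
   \<and> (\<forall>s>0. \<forall>t>0. unitary_l2 (I (s + t)) (I s \<times> I t) (B s t))
   \<and> (\<forall>r>0. \<forall>s>0. \<forall>t>0. \<forall>f \<in> l2 (I (r + s + t)). \<forall>a b c.
        tens_left (B r s) (B (r + s) t f) ((a, b), c)
          = tens_right (B s t) (B r (s + t) f) (a, (b, c)))"

definition inclusion_subsystem :: "(real \<Rightarrow> 'a set) \<Rightarrow> (real \<Rightarrow> real \<Rightarrow> ('a \<Rightarrow> complex) \<Rightarrow> ('a \<times> 'a \<Rightarrow> complex))
    \<Rightarrow> (real \<Rightarrow> ('a \<Rightarrow> complex) set) \<Rightarrow> bool" where
  "inclusion_subsystem I B F \<longleftrightarrow>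
     (\<forall>t>0. closed_subspace (I t) (F t))
   \<and> (\<forall>s>0. \<forall>t>0. B s t ` F (s + t) \<subseteq> tensor_sub (I s) (I t) (F s) (F t))"

definition Ftilde :: "(real \<Rightarrow> 'a set) \<Rightarrow> (real \<Rightarrow> real \<Rightarrow> ('a \<Rightarrow> complex) \<Rightarrow> ('a \<times> 'a \<Rightarrow> complex))
    \<Rightarrow> (real \<Rightarrow> ('a \<Rightarrow> complex) set) \<Rightarrow> real \<Rightarrow> ('a \<Rightarrow> complex) set" where
  "Ftilde I B F t = cspan (I t)
     {z \<in> l2 (I t). \<exists>r x y. 0 < r \<and> r < t \<and> x \<in> ocomp (I r) (F r)
          \<and> y \<in> ocomp (I (t - r)) (F (t - r)) \<and> B r (t - r) z = tens x y}"

definition Fprime :: "(real \<Rightarrow> 'a set) \<Rightarrow> (real \<Rightarrow> real \<Rightarrow> ('a \<Rightarrow> complex) \<Rightarrow> ('a \<times> 'a \<Rightarrow> complex))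
    \<Rightarrow> (real \<Rightarrow> ('a \<Rightarrow> complex) set) \<Rightarrow> real \<Rightarrow> ('a \<Rightarrow> complex) set" where
  "Fprime I B F t = ocomp (I t) (Ftilde I B F t)"

end

theory Submission
  imports Defs
begin

text \<open>
  Let \<open>z \<perp> \<tilde>F\<^sub>s\<^sub>+\<^sub>t\<close> and \<open>w = B\<^sub>s\<^sub>,\<^sub>t z\<close>. If \<open>g \<in> E\<^sub>s\<close> corresponds to \<open>x \<otimes> y\<close> with
  \<open>x \<perp> F\<^sub>r\<close> and \<open>y \<perp> F\<^sub>s\<^sub>-\<^sub>r\<close>, then by associativity \<open>g \<otimes> b\<close> corresponds to \<open>x \<otimes> h\<close>
  where \<open>h \<in> E\<^sub>s\<^sub>-\<^sub>r\<^sub>+\<^sub>t\<close> corresponds to \<open>y \<otimes> b\<close>; since \<open>F\<close> is an inclusion subsystem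
  and \<open>y \<perp> F\<^sub>s\<^sub>-\<^sub>r\<close>, also \<open>h \<perp> F\<^sub>s\<^sub>-\<^sub>r\<^sub>+\<^sub>t\<close>, so \<open>x \<otimes> h\<close> is a generator of
  \<open>\<tilde>F\<^sub>s\<^sub>+\<^sub>t\<close> and \<open>g \<otimes> b \<perp> w\<close>. Together with the mirror argument this shows
  \<open>w \<perp> \<tilde>F\<^sub>s \<otimes> E\<^sub>t\<close> and \<open>w \<perp> E\<^sub>s \<otimes> \<tilde>F\<^sub>t\<close>. Splitting
  \<open>E\<^sub>s \<otimes> E\<^sub>t = (\<tilde>F\<^sub>s \<oplus> F'\<^sub>s) \<otimes> (\<tilde>F\<^sub>t \<oplus> F'\<^sub>t)\<close> by orthogonal projections, the only
  summand left is \<open>F'\<^sub>s \<otimes> F'\<^sub>t\<close>, which therefore contains \<open>w\<close>.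
  The projections exist because l2 is complete.
\<close>

definition sq_summable :: "('a \<Rightarrow> complex) \<Rightarrow> bool" where
  "sq_summable f \<longleftrightarrow> (\<lambda>i. (cmod (f i))\<^sup>2) summable_on UNIV"

lemma sq_summable_zero [simp]: "sq_summable (\<lambda>_. 0)"
  by (simp add: sq_summable_def)

lemma sq_summable_add:
  assumes "sq_summable f" "sq_summable g"
  shows "sq_summable (\<lambda>i. f i + g i)"
  unfolding sq_summable_def
proof (rule summable_on_comparison_test)
  show "(\<lambda>i. 2 * (cmod (f i))\<^sup>2 + 2 * (cmod (g i))\<^sup>2) summable_on UNIV"
    using assms unfolding sq_summable_def by (intro summable_on_add summable_on_cmult_right)
  fix i
  have "(cmod (f i + g i))\<^sup>2 \<le> (cmod (f i) + cmod (g i))\<^sup>2"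
    by (simp add: power_mono norm_triangle_ineq)
  also have "\<dots> \<le> 2 * (cmod (f i))\<^sup>2 + 2 * (cmod (g i))\<^sup>2"
    using sum_squares_bound[of "cmod (f i)" "cmod (g i)"] by (simp add: power2_sum)
  finally show "(cmod (f i + g i))\<^sup>2 \<le> 2 * (cmod (f i))\<^sup>2 + 2 * (cmod (g i))\<^sup>2" .
qed simp

lemma sq_summable_scale:
  assumes "sq_summable f"
  shows "sq_summable (\<lambda>i. c * f i)"
proof -
  have "(\<lambda>i. (cmod c)\<^sup>2 * (cmod (f i))\<^sup>2) summable_on UNIV"
    using assms unfolding sq_summable_def by (intro summable_on_cmult_right)
  thus ?thesis unfolding sq_summable_def by (simp add: norm_mult power_mult_distrib)
qed

lemma sq_summable_uminus: "sq_summable f \<Longrightarrow> sq_summable (\<lambda>i. - f i)"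
  by (simp add: sq_summable_def)

lemma sq_summable_diff: "sq_summable f \<Longrightarrow> sq_summable g \<Longrightarrow> sq_summable (\<lambda>i. f i - g i)"
  using sq_summable_add[of f "\<lambda>i. - g i"] sq_summable_uminus[of g] by simp

lemma sq_summable_inner_summable:
  assumes "sq_summable f" "sq_summable g"
  shows "(\<lambda>i. cnj (f i) * g i) summable_on UNIV"
proof -
  have "(\<lambda>i. norm (cnj (f i) * g i)) summable_on UNIV"
  proof (rule Infinite_Sum.abs_summable_on_comparison_test')
    show "(\<lambda>i. (cmod (f i))\<^sup>2 + (cmod (g i))\<^sup>2) summable_on UNIV"
      using assms unfolding sq_summable_def by (intro summable_on_add)
    show "norm (cnj (f i) * g i) \<le> (cmod (f i))\<^sup>2 + (cmod (g i))\<^sup>2" for i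
      using sum_squares_bound[of "cmod (f i)" "cmod (g i)"]
        mult_nonneg_nonneg[OF norm_ge_zero norm_ge_zero, of "f i" "g i"]
      unfolding norm_mult complex_mod_cnj by linarith
  qed
  thus ?thesis using summable_on_iff_abs_summable_on_complex by blast
qed

lemma mem_l2_iff: "f \<in> l2 I \<longleftrightarrow> sq_summable f \<and> (\<forall>i. i \<notin> I \<longrightarrow> f i = 0)"
  by (auto simp: l2_def sq_summable_def)

lemma l2_sq_summable: "f \<in> l2 I \<Longrightarrow> sq_summable f"
  by (simp add: mem_l2_iff)

lemma l2_zero: "(\<lambda>_. 0) \<in> l2 I"
  by (simp add: mem_l2_iff)

lemma l2_add: "f \<in> l2 I \<Longrightarrow> g \<in> l2 I \<Longrightarrow> (\<lambda>i. f i + g i) \<in> l2 I"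
  by (simp add: mem_l2_iff sq_summable_add)

lemma l2_scale: "f \<in> l2 I \<Longrightarrow> (\<lambda>i. c * f i) \<in> l2 I"
  by (simp add: mem_l2_iff sq_summable_scale)

lemma l2_diff: "f \<in> l2 I \<Longrightarrow> g \<in> l2 I \<Longrightarrow> (\<lambda>i. f i - g i) \<in> l2 I"
  by (simp add: mem_l2_iff sq_summable_diff)

lemma l2_inner_add_left:
  "sq_summable f \<Longrightarrow> sq_summable g \<Longrightarrow> sq_summable h \<Longrightarrow>
   l2_inner (\<lambda>i. f i + g i) h = l2_inner f h + l2_inner g h"
  unfolding l2_inner_def by (simp add: distrib_right infsum_add sq_summable_inner_summable)

lemma l2_inner_diff_right:
  "sq_summable f \<Longrightarrow> sq_summable g \<Longrightarrow> sq_summable h \<Longrightarrow>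
   l2_inner h (\<lambda>i. f i - g i) = l2_inner h f - l2_inner h g"
proof -
  assume sq: "sq_summable f" "sq_summable g" "sq_summable h"
  have "l2_inner h (\<lambda>i. f i - g i) = (\<Sum>\<^sub>\<infinity>i. cnj (h i) * f i + - (cnj (h i) * g i))"
    unfolding l2_inner_def by (simp add: right_diff_distrib)
  also have "\<dots> = l2_inner h f - l2_inner h g"
    unfolding l2_inner_def using sq
    by (subst infsum_add) (simp_all add: infsum_uminus summable_on_uminus sq_summable_inner_summable)
  finally show ?thesis .
qed

lemma l2_inner_scale_left: "l2_inner (\<lambda>i. c * f i) g = cnj c * l2_inner f g"
  unfolding l2_inner_def by (subst infsum_cmult_right'[symmetric]) (simp add: mult.assoc)

lemma l2_inner_scale_right: "l2_inner f (\<lambda>i. c * g i) = c * l2_inner f g"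
  unfolding l2_inner_def by (subst infsum_cmult_right'[symmetric]) (simp add: mult.left_commute)

lemma l2_inner_commute: "l2_inner g f = cnj (l2_inner f g)"
  unfolding l2_inner_def by (subst infsum_cnj[symmetric]) (simp add: mult.commute)

lemma l2_inner_eq_0_commute: "l2_inner g f = 0 \<longleftrightarrow> l2_inner f g = 0"
  by (subst l2_inner_commute) simp

lemma l2_inner_diff_left:
  "sq_summable f \<Longrightarrow> sq_summable g \<Longrightarrow> sq_summable h \<Longrightarrow>
   l2_inner (\<lambda>i. f i - g i) h = l2_inner f h - l2_inner g h"
  by (subst (1 2 3) l2_inner_commute) (simp add: l2_inner_diff_right)

lemma l2_inner_self:
  assumes "sq_summable f"
  shows "l2_inner f f = of_real (\<Sum>\<^sub>\<infinity>i. (cmod (f i))\<^sup>2)"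
proof -
  have "l2_inner f f = (\<Sum>\<^sub>\<infinity>i. of_real ((cmod (f i))\<^sup>2))"
    unfolding l2_inner_def by (intro infsum_cong) (metis complex_norm_square mult.commute)
  also have "\<dots> = of_real (\<Sum>\<^sub>\<infinity>i. (cmod (f i))\<^sup>2)"
    using assms unfolding sq_summable_def by (intro infsumI has_sum_of_real has_sum_infsum)
  finally show ?thesis .
qed

lemma l2_inner_self_eq_0D:
  assumes "sq_summable f" "l2_inner f f = 0"
  shows "f = (\<lambda>_. 0)"
proof
  fix i
  have "(\<Sum>\<^sub>\<infinity>i. (cmod (f i))\<^sup>2) = 0" using assms l2_inner_self[of f] by simp
  hence "(cmod (f i))\<^sup>2 = 0"
    by (intro nonneg_infsum_le_0D[of _ UNIV]) (use assms(1) in \<open>auto simp: sq_summable_def\<close>)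
  thus "f i = 0" by simp
qed

section \<open>The Hilbert space of square-summable functions\<close>

typedef 'a ell2 = "{f :: 'a \<Rightarrow> complex. sq_summable f}" morphisms Rep_ell2 Abs_ell2
  by (rule exI[of _ "\<lambda>_. 0"]) simp

setup_lifting type_definition_ell2

text \<open>l2 is regarded as a real inner product space with inner product \<open>Re (l2_inner f g)\<close>,
  so that the library's theory of real inner product and complete spaces applies.\<close>

instantiation ell2 :: (type) real_vector
begin
lift_definition zero_ell2 :: "'a ell2" is "\<lambda>_. 0" by simp
lift_definition plus_ell2 :: "'a ell2 \<Rightarrow> 'a ell2 \<Rightarrow> 'a ell2" is "\<lambda>f g i. f i + g i"
  by (rule sq_summable_add)
lift_definition uminus_ell2 :: "'a ell2 \<Rightarrow> 'a ell2" is "\<lambda>f i. - f i"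
  by (rule sq_summable_uminus)
lift_definition minus_ell2 :: "'a ell2 \<Rightarrow> 'a ell2 \<Rightarrow> 'a ell2" is "\<lambda>f g i. f i - g i"
  by (rule sq_summable_diff)
lift_definition scaleR_ell2 :: "real \<Rightarrow> 'a ell2 \<Rightarrow> 'a ell2" is "\<lambda>r f i. complex_of_real r * f i"
  by (rule sq_summable_scale)
instance
proof
  fix x y z :: "'a ell2" and r s :: real
  show "x + y + z = x + (y + z)" by transfer (simp add: add.assoc)
  show "x + y = y + x" by transfer (simp add: add.commute)
  show "0 + x = x" by transfer simp
  show "- x + x = 0" by transfer simp
  show "x - y = x + - y" by transfer simp
  show "r *\<^sub>R (x + y) = r *\<^sub>R x + r *\<^sub>R y" by transfer (simp add: distrib_left)
  show "(r + s) *\<^sub>R x = r *\<^sub>R x + s *\<^sub>R x" by transfer (simp add: distrib_right)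
  show "r *\<^sub>R s *\<^sub>R x = (r * s) *\<^sub>R x" by transfer (simp add: mult.assoc)
  show "1 *\<^sub>R x = x" by transfer simp
qed
end

instantiation ell2 :: (type) real_inner
begin
lift_definition inner_ell2 :: "'a ell2 \<Rightarrow> 'a ell2 \<Rightarrow> real" is "\<lambda>f g. Re (l2_inner f g)" .
definition norm_ell2 :: "'a ell2 \<Rightarrow> real" where "norm_ell2 x = sqrt (inner x x)"
definition sgn_ell2 :: "'a ell2 \<Rightarrow> 'a ell2" where "sgn_ell2 x = x /\<^sub>R norm x"
definition dist_ell2 :: "'a ell2 \<Rightarrow> 'a ell2 \<Rightarrow> real" where "dist_ell2 x y = norm (x - y)"
definition uniformity_ell2 :: "('a ell2 \<times> 'a ell2) filter" where
  "uniformity_ell2 = (INF e\<in>{0<..}. principal {(x, y). dist x y < e})"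
definition open_ell2 :: "'a ell2 set \<Rightarrow> bool" where
  "open_ell2 U = (\<forall>x\<in>U. eventually (\<lambda>(x', y). x' = x \<longrightarrow> y \<in> U) uniformity)"
instance
proof
  fix x y z :: "'a ell2" and r :: real and U :: "'a ell2 set"
  show "sgn x = inverse (norm x) *\<^sub>R x" by (simp add: sgn_ell2_def)
  show "dist x y = norm (x - y)" by (simp add: dist_ell2_def)
  show "(uniformity :: ('a ell2 \<times> 'a ell2) filter) = (INF e\<in>{0<..}. principal {(x, y). dist x y < e})"
    by (simp add: uniformity_ell2_def)
  show "open U = (\<forall>x\<in>U. \<forall>\<^sub>F (x', y) in uniformity. x' = x \<longrightarrow> y \<in> U)"
    by (simp add: open_ell2_def)
  show "inner x y = inner y x" by transfer (metis cnj.sel(1) l2_inner_commute)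
  show "inner (x + y) z = inner x z + inner y z" by transfer (simp add: l2_inner_add_left)
  show "inner (r *\<^sub>R x) y = r * inner x y" by transfer (simp add: l2_inner_scale_left)
  show "0 \<le> inner x x" by transfer (simp add: l2_inner_self infsum_nonneg)
  show "inner x x = 0 \<longleftrightarrow> x = 0"
    by transfer (use l2_inner_self l2_inner_self_eq_0D in \<open>force simp: l2_inner_def\<close>)
  show "norm x = sqrt (inner x x)" by (simp add: norm_ell2_def)
qed
end

lemma Rep_ell2_sq_summable [simp]: "sq_summable (Rep_ell2 x)"
  using Rep_ell2 by auto

lemma Rep_Abs_ell2: "sq_summable f \<Longrightarrow> Rep_ell2 (Abs_ell2 f) = f"
  by (simp add: Abs_ell2_inverse)

lemma Rep_ell2_diff: "Rep_ell2 (x - y) = (\<lambda>i. Rep_ell2 x i - Rep_ell2 y i)"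
  by transfer simp

lemma Abs_ell2_add: "sq_summable f \<Longrightarrow> sq_summable g \<Longrightarrow> Abs_ell2 f + Abs_ell2 g = Abs_ell2 (\<lambda>i. f i + g i)"
  by (simp add: plus_ell2.abs_eq eq_onp_def)

lemma Abs_ell2_diff: "sq_summable f \<Longrightarrow> sq_summable g \<Longrightarrow> Abs_ell2 f - Abs_ell2 g = Abs_ell2 (\<lambda>i. f i - g i)"
  by (simp add: minus_ell2.abs_eq eq_onp_def)

lemma Abs_ell2_scaleR: "sq_summable f \<Longrightarrow> r *\<^sub>R Abs_ell2 f = Abs_ell2 (\<lambda>i. complex_of_real r * f i)"
  by (simp add: scaleR_ell2.abs_eq eq_onp_def)

lemma inner_Abs_ell2: "sq_summable f \<Longrightarrow> sq_summable g \<Longrightarrow> inner (Abs_ell2 f) (Abs_ell2 g) = Re (l2_inner f g)"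
  by (simp add: inner_ell2.abs_eq eq_onp_def)

lemma power2_norm_ell2: "(norm x)\<^sup>2 = (\<Sum>\<^sub>\<infinity>i. (cmod (Rep_ell2 x i))\<^sup>2)"
  by (simp add: power2_norm_eq_inner inner_ell2.rep_eq l2_inner_self)

lemma norm_ell2_eq: "norm x = sqrt (\<Sum>\<^sub>\<infinity>i. (cmod (Rep_ell2 x i))\<^sup>2)"
  by (metis power2_norm_ell2 norm_ge_zero real_sqrt_unique)

lemma l2_dist_eq_norm: "sq_summable f \<Longrightarrow> sq_summable g \<Longrightarrow> l2_dist f g = norm (Abs_ell2 f - Abs_ell2 g)"
  by (simp add: l2_dist_def norm_ell2_eq Abs_ell2_diff sq_summable_diff Abs_ell2_inverse)

lemma norm_Rep_ell2_le: "cmod (Rep_ell2 x i) \<le> norm x"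
proof -
  have "(cmod (Rep_ell2 x i))\<^sup>2 \<le> (\<Sum>\<^sub>\<infinity>i. (cmod (Rep_ell2 x i))\<^sup>2)"
    using finite_sum_le_infsum[of "\<lambda>i. (cmod (Rep_ell2 x i))\<^sup>2" UNIV "{i}"]
    using Rep_ell2_sq_summable[of x] unfolding sq_summable_def by simp
  thus ?thesis using power2_norm_ell2[of x] by (metis norm_ge_zero power2_le_imp_le)
qed

lemma dist_Rep_ell2_le: "dist (Rep_ell2 x i) (Rep_ell2 y i) \<le> dist x y"
  using norm_Rep_ell2_le[of "x - y" i] by (simp add: dist_norm Rep_ell2_diff)

lemma Cauchy_Rep_ell2: "Cauchy X \<Longrightarrow> Cauchy (\<lambda>n. Rep_ell2 (X n) i)"
  by (meson dist_Rep_ell2_le le_less_trans metric_CauchyD metric_CauchyI)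

lemma tendsto_Rep_ell2: "X \<longlonglongrightarrow> l \<Longrightarrow> (\<lambda>n. Rep_ell2 (X n) i) \<longlonglongrightarrow> Rep_ell2 l i"
  by (rule metric_LIMSEQ_I) (meson dist_Rep_ell2_le le_less_trans metric_LIMSEQ_D)

lemma ell2_limit_bound:
  assumes lim: "\<And>i. (\<lambda>m. Rep_ell2 (X m) i) \<longlonglongrightarrow> f i"
    and close: "\<And>m. m \<ge> N \<Longrightarrow> dist (X n) (X m) \<le> e"
  shows "sq_summable (\<lambda>i. Rep_ell2 (X n) i - f i)"
    and "(\<Sum>\<^sub>\<infinity>i. (cmod (Rep_ell2 (X n) i - f i))\<^sup>2) \<le> e\<^sup>2"
proof -
  have finite_bound: "(\<Sum>i\<in>F. (cmod (Rep_ell2 (X n) i - f i))\<^sup>2) \<le> e\<^sup>2" if "finite F" for F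
  proof (rule LIMSEQ_le_const2)
    show "(\<lambda>m. \<Sum>i\<in>F. (cmod (Rep_ell2 (X n) i - Rep_ell2 (X m) i))\<^sup>2)
        \<longlonglongrightarrow> (\<Sum>i\<in>F. (cmod (Rep_ell2 (X n) i - f i))\<^sup>2)"
      by (intro tendsto_intros lim)
    show "\<exists>M. \<forall>m\<ge>M. (\<Sum>i\<in>F. (cmod (Rep_ell2 (X n) i - Rep_ell2 (X m) i))\<^sup>2) \<le> e\<^sup>2"
    proof (intro exI allI impI)
      fix m assume "N \<le> m"
      have "(\<Sum>i\<in>F. (cmod (Rep_ell2 (X n) i - Rep_ell2 (X m) i))\<^sup>2)
          \<le> (\<Sum>\<^sub>\<infinity>i. (cmod (Rep_ell2 (X n - X m) i))\<^sup>2)"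
        using Rep_ell2_sq_summable[of "X n - X m"] that
        unfolding sq_summable_def Rep_ell2_diff by (intro finite_sum_le_infsum) auto
      also have "\<dots> = (dist (X n) (X m))\<^sup>2" by (simp add: power2_norm_ell2 dist_norm)
      also have "\<dots> \<le> e\<^sup>2" using close[OF \<open>N \<le> m\<close>] by (simp add: power_mono)
      finally show "(\<Sum>i\<in>F. (cmod (Rep_ell2 (X n) i - Rep_ell2 (X m) i))\<^sup>2) \<le> e\<^sup>2" .
    qed
  qed
  have "(\<lambda>i. (cmod (Rep_ell2 (X n) i - f i))\<^sup>2) summable_on UNIV"
    by (rule nonneg_bdd_above_summable_on) (auto intro!: bdd_aboveI[where M="e\<^sup>2"] finite_bound)
  then show "sq_summable (\<lambda>i. Rep_ell2 (X n) i - f i)"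
    and "(\<Sum>\<^sub>\<infinity>i. (cmod (Rep_ell2 (X n) i - f i))\<^sup>2) \<le> e\<^sup>2"
    using finite_bound by (auto simp: sq_summable_def intro: infsum_le_finite_sums)
qed

instance ell2 :: (type) complete_space
proof
  fix X :: "nat \<Rightarrow> 'a ell2" assume "Cauchy X"
  define f where "f i = lim (\<lambda>n. Rep_ell2 (X n) i)" for i
  have lim: "(\<lambda>n. Rep_ell2 (X n) i) \<longlonglongrightarrow> f i" for i
    using Cauchy_Rep_ell2[OF \<open>Cauchy X\<close>, of i]
    unfolding f_def by (simp add: Cauchy_convergent_iff convergent_LIMSEQ_iff)
  have eventually_close: "\<exists>N. \<forall>n\<ge>N. sq_summable (\<lambda>i. Rep_ell2 (X n) i - f i)
      \<and> (\<Sum>\<^sub>\<infinity>i. (cmod (Rep_ell2 (X n) i - f i))\<^sup>2) \<le> e\<^sup>2" if "e > 0" for e :: real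
  proof -
    obtain N where "\<forall>m\<ge>N. \<forall>n\<ge>N. dist (X m) (X n) < e"
      using \<open>Cauchy X\<close> metric_CauchyD \<open>e > 0\<close> by blast
    then show ?thesis
      using ell2_limit_bound[OF lim, of N] by (meson less_imp_le)
  qed
  obtain N where "sq_summable (\<lambda>i. Rep_ell2 (X N) i - f i)"
    using eventually_close[of 1] by auto
  then have "sq_summable f"
    using sq_summable_diff[OF Rep_ell2_sq_summable[of "X N"]] by force
  have "X \<longlonglongrightarrow> Abs_ell2 f"
  proof (rule LIMSEQ_I)
    fix r :: real assume "r > 0"
    then obtain N where N: "\<forall>n\<ge>N. (\<Sum>\<^sub>\<infinity>i. (cmod (Rep_ell2 (X n) i - f i))\<^sup>2) \<le> (r/2)\<^sup>2"
      using eventually_close[of "r/2"] by auto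
    have "norm (X n - Abs_ell2 f) < r" if "N \<le> n" for n
    proof -
      have "norm (X n - Abs_ell2 f) = sqrt (\<Sum>\<^sub>\<infinity>i. (cmod (Rep_ell2 (X n) i - f i))\<^sup>2)"
        by (simp add: norm_ell2_eq Rep_ell2_diff Abs_ell2_inverse \<open>sq_summable f\<close>)
      also have "\<dots> \<le> r/2" using N that \<open>r > 0\<close> real_sqrt_le_mono[of _ "(r/2)\<^sup>2"] by fastforce
      finally show ?thesis using \<open>r > 0\<close> by simp
    qed
    then show "\<exists>N. \<forall>n\<ge>N. norm (X n - Abs_ell2 f) < r" by blast
  qed
  then show "convergent X" by (auto simp: convergent_def)
qed

section \<open>Orthogonal projection onto closed subspaces\<close>

lemma norm_diff_near_minimizers:
  fixes a u v :: "'v::real_inner"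
  assumes mid: "d \<le> norm (a - (1/2) *\<^sub>R (u + v))"
    and u: "norm (a - u) \<le> d + \<delta>" and v: "norm (a - v) \<le> d + \<delta>"
    and "0 \<le> d" "0 \<le> \<delta>"
  shows "(norm (u - v))\<^sup>2 \<le> 4 * \<delta> * (2 * d + \<delta>)"
proof -
  have parallelogram: "(norm (u - v))\<^sup>2 = 2 * (norm (a - u))\<^sup>2 + 2 * (norm (a - v))\<^sup>2
      - 4 * (norm (a - (1/2) *\<^sub>R (u + v)))\<^sup>2"
    by (simp add: power2_norm_eq_inner inner_add_left inner_add_right inner_diff_left
        inner_diff_right inner_commute algebra_simps)
  have "d\<^sup>2 \<le> (norm (a - (1/2) *\<^sub>R (u + v)))\<^sup>2" "(norm (a - u))\<^sup>2 \<le> (d + \<delta>)\<^sup>2"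
    "(norm (a - v))\<^sup>2 \<le> (d + \<delta>)\<^sup>2"
    using assms by (auto intro!: power_mono)
  then show ?thesis unfolding parallelogram by (simp add: power2_eq_square algebra_simps)
qed

lemma Cauchy_minimizing_sequence:
  fixes a :: "'v::real_inner"
  assumes "convex S" and y_in: "\<And>n. y n \<in> S" and d_le: "\<And>x. x \<in> S \<Longrightarrow> d \<le> norm (a - x)"
    and "0 \<le> d" and y_near: "\<And>n. norm (a - y n) < d + 1 / (real n + 1)"
  shows "Cauchy y"
proof (rule metric_CauchyI)
  have bound: "(norm (y m - y n))\<^sup>2 \<le> 4 * (2 * d + 1) / (real N + 1)"
    if "N \<le> m" "N \<le> n" for N m n
  proof -
    define \<delta> where "\<delta> = 1 / (real N + 1)"
    have "0 < \<delta>" "\<delta> \<le> 1" by (auto simp: \<delta>_def field_simps)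
    have "1 / (real m + 1) \<le> \<delta>" "1 / (real n + 1) \<le> \<delta>"
      using that by (auto simp: \<delta>_def frac_le)
    moreover have "(1/2) *\<^sub>R (y m + y n) \<in> S"
      using convexD[OF \<open>convex S\<close> y_in y_in, of "1/2" "1/2"] by (simp add: scaleR_right_distrib)
    ultimately have "(norm (y m - y n))\<^sup>2 \<le> 4 * \<delta> * (2 * d + \<delta>)"
      using y_near[of m] y_near[of n] \<open>0 \<le> d\<close> \<open>0 < \<delta>\<close>
      by (intro norm_diff_near_minimizers[where a=a] d_le) auto
    also have "\<dots> \<le> 4 * \<delta> * (2 * d + 1)" using \<open>0 < \<delta>\<close> \<open>\<delta> \<le> 1\<close> by simp
    finally show ?thesis by (simp add: \<delta>_def)
  qed
  fix e :: real assume "0 < e"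
  obtain N :: nat where "4 * (2 * d + 1) / e\<^sup>2 < real N + 1"
    by (metis reals_Archimedean2 add.commute add_strict_increasing zero_less_one less_imp_le)
  then have "4 * (2 * d + 1) / (real N + 1) < e\<^sup>2"
    using \<open>0 < e\<close> \<open>0 \<le> d\<close> by (simp add: field_simps)
  then have "\<forall>m\<ge>N. \<forall>n\<ge>N. (norm (y m - y n))\<^sup>2 < e\<^sup>2" using bound by (meson le_less_trans)
  then show "\<exists>M. \<forall>m\<ge>M. \<forall>n\<ge>M. dist (y m) (y n) < e"
    using \<open>0 < e\<close> unfolding dist_norm by (meson power_less_imp_less_base less_imp_le)
qed

lemma closest_point_exists_complete:
  fixes a :: "'v::{real_inner,complete_space}"
  assumes "closed S" "convex S" "S \<noteq> {}"
  shows "\<exists>p\<in>S. \<forall>x\<in>S. norm (a - p) \<le> norm (a - x)"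
proof -
  define d where "d = infdist a S"
  have "0 \<le> d" by (simp add: d_def infdist_nonneg)
  have d_le: "d \<le> norm (a - x)" if "x \<in> S" for x
    using infdist_le[OF that, of a] by (simp add: d_def dist_norm)
  have "\<exists>y\<in>S. norm (a - y) < d + 1 / (real n + 1)" for n
  proof -
    have "(INF x\<in>S. dist a x) < d + 1 / (real n + 1)"
      using infdist_notempty[OF \<open>S \<noteq> {}\<close>, of a] d_def by simp
    then show ?thesis
      by (subst (asm) cINF_less_iff) (use \<open>S \<noteq> {}\<close> in \<open>auto intro: bdd_belowI[where m=0] simp: dist_norm\<close>)
  qed
  then obtain y where y_in: "\<And>n. y n \<in> S" and y_near: "\<And>n. norm (a - y n) < d + 1 / (real n + 1)"
    by metis
  have "Cauchy y"
    using Cauchy_minimizing_sequence[OF \<open>convex S\<close> y_in d_le \<open>0 \<le> d\<close> y_near] .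
  then obtain p where "y \<longlonglongrightarrow> p" by (auto simp: Cauchy_convergent_iff convergent_def)
  have "p \<in> S" using \<open>closed S\<close> y_in \<open>y \<longlonglongrightarrow> p\<close> closed_sequential_limits by blast
  have "(\<lambda>n. d + 1 / (real n + 1)) \<longlonglongrightarrow> d + 0"
    using LIMSEQ_inverse_real_of_nat by (intro tendsto_intros) (simp add: inverse_eq_divide add.commute)
  then have "norm (a - p) \<le> d"
    using y_near \<open>y \<longlonglongrightarrow> p\<close>
    by (intro LIMSEQ_le[of "\<lambda>n. norm (a - y n)" _ "\<lambda>n. d + 1 / (real n + 1)"])
      (auto intro!: tendsto_intros less_imp_le)
  then show ?thesis using \<open>p \<in> S\<close> d_le by (meson order_trans)
qed

lemma orthogonal_projection_exists:
  fixes a :: "'v::{real_inner,complete_space}"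
  assumes "closed S" "subspace S"
  shows "\<exists>p\<in>S. \<forall>z\<in>S. inner (a - p) z = 0"
proof -
  obtain p where "p \<in> S" and closest: "\<forall>x\<in>S. dist a p \<le> dist a x"
    using closest_point_exists_complete[of S a] assms subspace_imp_convex subspace_0
    by (fastforce simp: dist_norm)
  have "inner (a - p) z = 0" if "z \<in> S" for z
  proof -
    have "p + z \<in> S" "p - z \<in> S"
      using \<open>p \<in> S\<close> that \<open>subspace S\<close> by (auto simp: subspace_add subspace_diff)
    then have "inner (a - p) z \<le> 0" "inner (a - p) (- z) \<le> 0"
      using any_closest_point_dot[OF subspace_imp_convex[OF \<open>subspace S\<close>] \<open>closed S\<close> \<open>p \<in> S\<close> _ closest]
      by fastforce+
    then show ?thesis by simp
  qed
  then show ?thesis using \<open>p \<in> S\<close> by blast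
qed

lemma closed_subspace_l2D: "closed_subspace I V \<Longrightarrow> V \<subseteq> l2 I"
  by (simp add: closed_subspace_def)

lemma closed_subspace_l2: "closed_subspace I (l2 I)"
  by (simp add: closed_subspace_def l2_add l2_scale l2_zero)

lemma closed_subspace_Inter:
  assumes "\<And>V. V \<in> \<V> \<Longrightarrow> closed_subspace I V" "\<V> \<noteq> {}"
  shows "closed_subspace I (\<Inter>\<V>)"
  unfolding closed_subspace_def
proof (intro conjI allI impI ballI)
  have V: "\<And>V. V \<in> \<V> \<Longrightarrow> V \<subseteq> l2 I \<and> (\<lambda>_. 0) \<in> V
     \<and> (\<forall>f\<in>V. \<forall>g\<in>V. (\<lambda>i. f i + g i) \<in> V) \<and> (\<forall>c::complex. \<forall>f\<in>V. (\<lambda>i. c * f i) \<in> V)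
     \<and> (\<forall>X f. (\<forall>n. X n \<in> V) \<and> f \<in> l2 I \<and> (\<lambda>n. l2_dist (X n) f) \<longlonglongrightarrow> 0 \<longrightarrow> f \<in> V)"
    using assms(1) unfolding closed_subspace_def by blast
  show "\<Inter>\<V> \<subseteq> l2 I" using V assms(2) by blast
  show "(\<lambda>_. 0) \<in> \<Inter>\<V>" using V by blast
  show "(\<lambda>i. f i + g i) \<in> \<Inter>\<V>" if "f \<in> \<Inter>\<V>" "g \<in> \<Inter>\<V>" for f g
    using V that by blast
  show "(\<lambda>i. c * f i) \<in> \<Inter>\<V>" if "f \<in> \<Inter>\<V>" for c f
    using V that by blast
  show "f \<in> \<Inter>\<V>" if "(\<forall>n. X n \<in> \<Inter>\<V>) \<and> f \<in> l2 I \<and> (\<lambda>n. l2_dist (X n) f) \<longlonglongrightarrow> 0" for X f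
    using V that by (meson InterD InterI)
qed

lemma closed_subspace_cspan: "S \<subseteq> l2 I \<Longrightarrow> closed_subspace I (cspan I S)"
  unfolding cspan_def using closed_subspace_l2 by (intro closed_subspace_Inter) auto

lemma cspan_superset: "S \<subseteq> l2 I \<Longrightarrow> S \<subseteq> cspan I S"
  unfolding cspan_def by auto

lemma cspan_least: "closed_subspace I V \<Longrightarrow> S \<subseteq> V \<Longrightarrow> cspan I S \<subseteq> V"
  unfolding cspan_def by auto

lemma ocomp_l2: "ocomp I W \<subseteq> l2 I"
  by (auto simp: ocomp_def)

lemma ocomp_ocomp_superset: "A \<subseteq> l2 I \<Longrightarrow> A \<subseteq> ocomp I (ocomp I A)"
  by (auto simp: ocomp_def l2_inner_eq_0_commute)

lemma l2_dist_tendsto_Abs_ell2: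
  assumes "\<And>n. sq_summable (X n)" "sq_summable f" "(\<lambda>n. l2_dist (X n) f) \<longlonglongrightarrow> 0"
  shows "(\<lambda>n. Abs_ell2 (X n)) \<longlonglongrightarrow> Abs_ell2 f"
  using assms by (simp add: l2_dist_eq_norm tendsto_norm_zero_iff LIM_zero_iff)

lemma l2_inner_tendsto:
  assumes "\<And>n. sq_summable (X n)" "sq_summable f" "sq_summable v"
    and "(\<lambda>n. l2_dist (X n) f) \<longlonglongrightarrow> 0"
  shows "(\<lambda>n. l2_inner (X n) v) \<longlonglongrightarrow> l2_inner f v"
proof -
  have lim: "(\<lambda>n. Abs_ell2 (X n)) \<longlonglongrightarrow> Abs_ell2 f"
    using assms by (intro l2_dist_tendsto_Abs_ell2)
  have Re_lim: "(\<lambda>n. Re (l2_inner (X n) g)) \<longlonglongrightarrow> Re (l2_inner f g)" if "sq_summable g" for g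
    using tendsto_inner[OF lim tendsto_const[of "Abs_ell2 g"]] assms that
    by (simp add: inner_Abs_ell2)
  have "(\<lambda>n. Re (l2_inner (X n) (\<lambda>j. - \<i> * v j))) \<longlonglongrightarrow> Re (l2_inner f (\<lambda>j. - \<i> * v j))"
    using assms by (intro Re_lim sq_summable_scale)
  moreover have "l2_inner g (\<lambda>j. - \<i> * v j) = - \<i> * l2_inner g v" for g
    by (rule l2_inner_scale_right)
  ultimately have "(\<lambda>n. Im (l2_inner (X n) v)) \<longlonglongrightarrow> Im (l2_inner f v)"
    by simp
  with Re_lim[OF \<open>sq_summable v\<close>] show ?thesis by (simp add: tendsto_complex_iff)
qed

definition bounded_linear_l2 :: "'a set \<Rightarrow> 'b set \<Rightarrow> (('a \<Rightarrow> complex) \<Rightarrow> ('b \<Rightarrow> complex)) \<Rightarrow> bool" where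
  "bounded_linear_l2 I K T \<longleftrightarrow> (\<forall>f\<in>l2 I. T f \<in> l2 K)
     \<and> (\<forall>f\<in>l2 I. \<forall>g\<in>l2 I. T (\<lambda>i. f i + g i) = (\<lambda>k. T f k + T g k))
     \<and> (\<forall>c. \<forall>f\<in>l2 I. T (\<lambda>i. c * f i) = (\<lambda>k. c * T f k))
     \<and> (\<exists>C. \<forall>f\<in>l2 I. \<forall>g\<in>l2 I. l2_dist (T f) (T g) \<le> C * l2_dist f g)"

lemma bounded_linear_l2_id: "bounded_linear_l2 I I (\<lambda>f. f)"
  unfolding bounded_linear_l2_def by (intro conjI exI[of _ 1]) auto

lemma bounded_linear_l2_mem: "bounded_linear_l2 I K T \<Longrightarrow> f \<in> l2 I \<Longrightarrow> T f \<in> l2 K"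
  unfolding bounded_linear_l2_def by blast

lemma bounded_linear_l2_add:
  "bounded_linear_l2 I K T \<Longrightarrow> f \<in> l2 I \<Longrightarrow> g \<in> l2 I \<Longrightarrow> T (\<lambda>i. f i + g i) = (\<lambda>k. T f k + T g k)"
  unfolding bounded_linear_l2_def by blast

lemma bounded_linear_l2_scale:
  "bounded_linear_l2 I K T \<Longrightarrow> f \<in> l2 I \<Longrightarrow> T (\<lambda>i. c * f i) = (\<lambda>k. c * T f k)"
  unfolding bounded_linear_l2_def by blast

lemma bounded_linear_l2_zero: "bounded_linear_l2 I K T \<Longrightarrow> T (\<lambda>_. 0) = (\<lambda>_. 0)"
  using bounded_linear_l2_scale[OF _ l2_zero, of I K T 0] by simp

lemma bounded_linear_l2_tendsto:
  assumes T: "bounded_linear_l2 I K T" and X: "\<And>n. X n \<in> l2 I" and f: "f \<in> l2 I"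
    and lim: "(\<lambda>n. l2_dist (X n) f) \<longlonglongrightarrow> 0"
  shows "(\<lambda>n. l2_dist (T (X n)) (T f)) \<longlonglongrightarrow> 0"
proof -
  obtain C where C: "\<And>g. g \<in> l2 I \<Longrightarrow> l2_dist (T g) (T f) \<le> C * l2_dist g f"
    using T f unfolding bounded_linear_l2_def by blast
  show ?thesis
  proof (rule tendsto_sandwich[of "\<lambda>_. 0" _ _ "\<lambda>n. C * l2_dist (X n) f"])
    show "\<forall>\<^sub>F n in sequentially. 0 \<le> l2_dist (T (X n)) (T f)"
      by (simp add: l2_dist_def infsum_nonneg)
    show "\<forall>\<^sub>F n in sequentially. l2_dist (T (X n)) (T f) \<le> C * l2_dist (X n) f"
      using C X by simp
    show "(\<lambda>n. C * l2_dist (X n) f) \<longlonglongrightarrow> 0"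
      using tendsto_mult_right_zero[OF lim] .
  qed simp
qed

lemma closed_subspace_orth_preimage:
  assumes T: "bounded_linear_l2 I K T" and w: "w \<in> l2 K"
  shows "closed_subspace I {a \<in> l2 I. l2_inner (T a) w = 0}"
  unfolding closed_subspace_def
proof (intro conjI allI impI ballI)
  have sq: "sq_summable (T f)" if "f \<in> l2 I" for f
    using bounded_linear_l2_mem[OF T that] by (rule l2_sq_summable)
  show "(\<lambda>_. 0) \<in> {a \<in> l2 I. l2_inner (T a) w = 0}"
    by (simp add: bounded_linear_l2_zero[OF T] l2_zero l2_inner_def)
  show "(\<lambda>i. f i + g i) \<in> {a \<in> l2 I. l2_inner (T a) w = 0}"
    if "f \<in> {a \<in> l2 I. l2_inner (T a) w = 0}" "g \<in> {a \<in> l2 I. l2_inner (T a) w = 0}" for f g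
    using that w sq by (simp add: l2_add bounded_linear_l2_add[OF T] l2_inner_add_left l2_sq_summable)
  show "(\<lambda>i. c * f i) \<in> {a \<in> l2 I. l2_inner (T a) w = 0}"
    if "f \<in> {a \<in> l2 I. l2_inner (T a) w = 0}" for c f
    using that by (simp add: l2_scale bounded_linear_l2_scale[OF T] l2_inner_scale_left)
  show "f \<in> {a \<in> l2 I. l2_inner (T a) w = 0}"
    if "(\<forall>n. X n \<in> {a \<in> l2 I. l2_inner (T a) w = 0}) \<and> f \<in> l2 I \<and> (\<lambda>n. l2_dist (X n) f) \<longlonglongrightarrow> 0"
    for X f
  proof -
    have "(\<lambda>n. l2_inner (T (X n)) w) \<longlonglongrightarrow> l2_inner (T f) w"
      using that w sq bounded_linear_l2_tendsto[OF T]
      by (intro l2_inner_tendsto) (auto intro: l2_sq_summable)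
    then show ?thesis using that by (simp add: LIMSEQ_const_iff)
  qed
qed (auto simp: l2_zero)

lemma cspan_orth_preimage:
  assumes "bounded_linear_l2 I K T" "w \<in> l2 K" "S \<subseteq> l2 I"
    and "\<And>a. a \<in> S \<Longrightarrow> l2_inner (T a) w = 0" and "a \<in> cspan I S"
  shows "l2_inner (T a) w = 0"
  using cspan_least[OF closed_subspace_orth_preimage[OF assms(1,2)], of S] assms(3-5) by blast

lemma closed_Abs_ell2_image:
  assumes M: "closed_subspace I M"
  shows "closed (Abs_ell2 ` M)"
  unfolding closed_sequential_limits
proof (intro allI impI)
  fix x l assume x: "(\<forall>n. x n \<in> Abs_ell2 ` M) \<and> x \<longlonglongrightarrow> l"
  have M_l2: "M \<subseteq> l2 I" using M by (rule closed_subspace_l2D)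
  have "\<forall>n. \<exists>g. g \<in> M \<and> x n = Abs_ell2 g" using x by blast
  then obtain g where g: "\<And>n. g n \<in> M" "\<And>n. x n = Abs_ell2 (g n)"
    by (auto dest!: choice)
  have g_l2: "g n \<in> l2 I" for n using g(1) M_l2 by blast
  have Rep_x: "Rep_ell2 (x n) = g n" for n
    by (simp add: g(2) Rep_Abs_ell2 l2_sq_summable[OF g_l2])
  have "Rep_ell2 l i = 0" if "i \<notin> I" for i
  proof -
    have "(\<lambda>n. Rep_ell2 (x n) i) \<longlonglongrightarrow> Rep_ell2 l i" using x by (intro tendsto_Rep_ell2) simp
    moreover have "Rep_ell2 (x n) i = 0" for n
      using g_l2[of n] that by (simp add: Rep_x mem_l2_iff)
    ultimately show ?thesis by (simp add: LIMSEQ_const_iff)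
  qed
  then have "Rep_ell2 l \<in> l2 I" by (simp add: mem_l2_iff)
  moreover have "l2_dist (g n) (Rep_ell2 l) = norm (x n - l)" for n
    using l2_dist_eq_norm[OF l2_sq_summable[OF g_l2] Rep_ell2_sq_summable]
    by (simp add: g(2) Rep_ell2_inverse)
  then have "(\<lambda>n. l2_dist (g n) (Rep_ell2 l)) \<longlonglongrightarrow> 0"
    using x by (simp add: LIM_zero_iff tendsto_norm_zero_iff)
  ultimately have "Rep_ell2 l \<in> M"
    using M g(1) unfolding closed_subspace_def by blast
  then show "l \<in> Abs_ell2 ` M" by (metis Rep_ell2_inverse image_eqI)
qed

lemma subspace_Abs_ell2_image:
  assumes M: "closed_subspace I M"
  shows "subspace (Abs_ell2 ` M)"
proof -
  have sq: "sq_summable f" if "f \<in> M" for f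
    using M that closed_subspace_l2D l2_sq_summable by blast
  have "(\<lambda>_. 0) \<in> M" and add: "\<And>f g. f \<in> M \<Longrightarrow> g \<in> M \<Longrightarrow> (\<lambda>i. f i + g i) \<in> M"
    and scale: "\<And>c f. f \<in> M \<Longrightarrow> (\<lambda>i. c * f i) \<in> M"
    using M unfolding closed_subspace_def by blast+
  then show ?thesis
    unfolding subspace_def zero_ell2_def
    by (auto simp: Abs_ell2_add Abs_ell2_scaleR sq)
qed

lemma orthogonal_decomposition_l2:
  assumes M: "closed_subspace I M" and a: "a \<in> l2 I"
  obtains p q where "p \<in> M" "q \<in> ocomp I M" "a = (\<lambda>i. p i + q i)"
proof -
  have sq: "sq_summable f" if "f \<in> M" for f
    using M that closed_subspace_l2D l2_sq_summable by blast
  obtain p where "p \<in> M" and orth: "\<forall>y\<in>M. inner (Abs_ell2 a - Abs_ell2 p) (Abs_ell2 y) = 0"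
    using orthogonal_projection_exists[OF closed_Abs_ell2_image[OF M] subspace_Abs_ell2_image[OF M]]
    by blast
  have a_p: "(\<lambda>i. a i - p i) \<in> l2 I"
    using a \<open>p \<in> M\<close> M closed_subspace_l2D l2_diff by blast
  have Re_orth: "Re (l2_inner (\<lambda>i. a i - p i) y) = 0" if "y \<in> M" for y
  proof -
    have "Abs_ell2 a - Abs_ell2 p = Abs_ell2 (\<lambda>i. a i - p i)"
      using a \<open>p \<in> M\<close> sq by (simp add: Abs_ell2_diff l2_sq_summable)
    then show ?thesis
      using orth that a_p sq by (simp add: inner_Abs_ell2 l2_sq_summable)
  qed
  have "l2_inner y (\<lambda>i. a i - p i) = 0" if "y \<in> M" for y
  proof -
    have "(\<lambda>i. \<i> * y i) \<in> M" using M that unfolding closed_subspace_def by blast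
    then have "Im (l2_inner (\<lambda>i. a i - p i) y) = 0"
      using Re_orth[of "\<lambda>i. \<i> * y i"] by (simp add: l2_inner_scale_right)
    with Re_orth[OF that] have "l2_inner (\<lambda>i. a i - p i) y = 0"
      by (simp add: complex_eq_iff)
    then show ?thesis by (simp add: l2_inner_eq_0_commute)
  qed
  then have "(\<lambda>i. a i - p i) \<in> ocomp I M" using a_p unfolding ocomp_def by blast
  then show ?thesis using that[OF \<open>p \<in> M\<close>] by force
qed

section \<open>Elementary tensors\<close>

lemma tens_apply [simp]: "tens x y (i, j) = x i * y j"
  by (simp add: tens_def)

lemma sq_summable_tens:
  assumes "sq_summable x" "sq_summable y"
  shows "sq_summable (tens x y)"
proof -
  have "(\<lambda>(i, j). (cmod (x i))\<^sup>2 * (cmod (y j))\<^sup>2) summable_on Sigma UNIV (\<lambda>_. UNIV)"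
  proof (rule summable_on_SigmaI[where g="\<lambda>i. (cmod (x i))\<^sup>2 * (\<Sum>\<^sub>\<infinity>j. (cmod (y j))\<^sup>2)"])
    show "((\<lambda>j. case (i, j) of (i, j) \<Rightarrow> (cmod (x i))\<^sup>2 * (cmod (y j))\<^sup>2) has_sum
        (cmod (x i))\<^sup>2 * (\<Sum>\<^sub>\<infinity>j. (cmod (y j))\<^sup>2)) UNIV" for i
      using assms(2) unfolding sq_summable_def by (simp add: has_sum_cmult_right)
    show "(\<lambda>i. (cmod (x i))\<^sup>2 * (\<Sum>\<^sub>\<infinity>j. (cmod (y j))\<^sup>2)) summable_on UNIV"
      using assms(1) unfolding sq_summable_def by (rule summable_on_cmult_left)
  qed auto
  moreover have "(\<lambda>p. (cmod (tens x y p))\<^sup>2) = (\<lambda>(i, j). (cmod (x i))\<^sup>2 * (cmod (y j))\<^sup>2)"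
    by (auto simp: fun_eq_iff norm_mult power_mult_distrib)
  ultimately show ?thesis unfolding sq_summable_def by simp
qed

lemma tens_l2: "x \<in> l2 I \<Longrightarrow> y \<in> l2 J \<Longrightarrow> tens x y \<in> l2 (I \<times> J)"
  using sq_summable_tens[of x y] unfolding mem_l2_iff by auto

lemma l2_inner_tens:
  assumes "sq_summable a" "sq_summable b" "sq_summable c" "sq_summable d"
  shows "l2_inner (tens a b) (tens c d) = l2_inner a c * l2_inner b d"
proof -
  have "(\<lambda>p. cnj (tens a b p) * tens c d p) summable_on Sigma UNIV (\<lambda>_. UNIV)"
    using sq_summable_inner_summable[OF sq_summable_tens[OF assms(1,2)] sq_summable_tens[OF assms(3,4)]]
    by simp
  then have "(\<Sum>\<^sub>\<infinity>p\<in>Sigma UNIV (\<lambda>_. UNIV). cnj (tens a b p) * tens c d p)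
      = (\<Sum>\<^sub>\<infinity>i. \<Sum>\<^sub>\<infinity>j. cnj (tens a b (i, j)) * tens c d (i, j))"
    by (rule infsum_Sigma_banach[symmetric])
  then have "l2_inner (tens a b) (tens c d) = (\<Sum>\<^sub>\<infinity>i. \<Sum>\<^sub>\<infinity>j. cnj (tens a b (i, j)) * tens c d (i, j))"
    unfolding l2_inner_def by simp
  also have "\<dots> = (\<Sum>\<^sub>\<infinity>i. cnj (a i) * c i * l2_inner b d)"
    unfolding l2_inner_def
    by (intro infsum_cong) (simp add: infsum_cmult_right'[symmetric] algebra_simps)
  also have "\<dots> = l2_inner a c * l2_inner b d"
    unfolding l2_inner_def by (rule infsum_cmult_left')
  finally show ?thesis .
qed

lemma l2_dist_tens_left:
  assumes "sq_summable u" "sq_summable a" "sq_summable b"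
  shows "l2_dist (tens u b) (tens a b) = l2_dist u a * sqrt (\<Sum>\<^sub>\<infinity>j. (cmod (b j))\<^sup>2)"
proof -
  have "tens u b p - tens a b p = tens (\<lambda>i. u i - a i) b p" for p
    by (cases p) (simp add: algebra_simps)
  moreover have "Re (l2_inner (tens (\<lambda>i. u i - a i) b) (tens (\<lambda>i. u i - a i) b))
      = (\<Sum>\<^sub>\<infinity>i. (cmod (u i - a i))\<^sup>2) * (\<Sum>\<^sub>\<infinity>j. (cmod (b j))\<^sup>2)"
    using assms by (simp add: l2_inner_tens sq_summable_diff l2_inner_self)
  ultimately show ?thesis
    using assms by (simp add: l2_dist_def l2_inner_self sq_summable_tens sq_summable_diff real_sqrt_mult)
qed

lemma l2_dist_tens_right:
  assumes "sq_summable u" "sq_summable a" "sq_summable b"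
  shows "l2_dist (tens b u) (tens b a) = sqrt (\<Sum>\<^sub>\<infinity>i. (cmod (b i))\<^sup>2) * l2_dist u a"
proof -
  have "tens b u p - tens b a p = tens b (\<lambda>i. u i - a i) p" for p
    by (cases p) (simp add: algebra_simps)
  moreover have "Re (l2_inner (tens b (\<lambda>i. u i - a i)) (tens b (\<lambda>i. u i - a i)))
      = (\<Sum>\<^sub>\<infinity>i. (cmod (b i))\<^sup>2) * (\<Sum>\<^sub>\<infinity>j. (cmod (u j - a j))\<^sup>2)"
    using assms by (simp add: l2_inner_tens sq_summable_diff l2_inner_self)
  ultimately show ?thesis
    using assms by (simp add: l2_dist_def l2_inner_self sq_summable_tens sq_summable_diff real_sqrt_mult)
qed

lemma bounded_linear_l2_tens_fixed_right:
  assumes "b \<in> l2 J"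
  shows "bounded_linear_l2 I (I \<times> J) (\<lambda>a. tens a b)"
  unfolding bounded_linear_l2_def
proof (intro conjI ballI allI exI)
  show "l2_dist (tens f b) (tens g b) \<le> sqrt (\<Sum>\<^sub>\<infinity>j. (cmod (b j))\<^sup>2) * l2_dist f g"
    if "f \<in> l2 I" "g \<in> l2 I" for f g
    using that assms by (simp add: l2_dist_tens_left l2_sq_summable)
qed (auto simp: tens_l2 assms fun_eq_iff algebra_simps)

lemma bounded_linear_l2_tens_fixed_left:
  assumes "a \<in> l2 I"
  shows "bounded_linear_l2 J (I \<times> J) (tens a)"
  unfolding bounded_linear_l2_def
proof (intro conjI ballI allI exI)
  show "l2_dist (tens a f) (tens a g) \<le> sqrt (\<Sum>\<^sub>\<infinity>i. (cmod (a i))\<^sup>2) * l2_dist f g"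
    if "f \<in> l2 J" "g \<in> l2 J" for f g
    using that assms by (simp add: l2_dist_tens_right l2_sq_summable)
qed (auto simp: tens_l2 assms fun_eq_iff algebra_simps)

lemma closed_subspace_tensor_sub:
  "P \<subseteq> l2 I \<Longrightarrow> Q \<subseteq> l2 J \<Longrightarrow> closed_subspace (I \<times> J) (tensor_sub I J P Q)"
  unfolding tensor_sub_def using tens_l2 by (intro closed_subspace_cspan) blast

lemma tens_mem_tensor_sub:
  "P \<subseteq> l2 I \<Longrightarrow> Q \<subseteq> l2 J \<Longrightarrow> a \<in> P \<Longrightarrow> b \<in> Q \<Longrightarrow> tens a b \<in> tensor_sub I J P Q"
  unfolding tensor_sub_def using tens_l2 by (intro cspan_superset[THEN subsetD]) blast+

lemma tensor_sub_orth_tens: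
  assumes P: "P \<subseteq> l2 I" and Q: "Q \<subseteq> l2 J" and a: "a \<in> l2 I" and b: "b \<in> l2 J"
    and orth: "a \<in> ocomp I P \<or> b \<in> ocomp J Q" and u: "u \<in> tensor_sub I J P Q"
  shows "l2_inner u (tens a b) = 0"
proof (rule cspan_orth_preimage[OF bounded_linear_l2_id tens_l2[OF a b] _ _ u[unfolded tensor_sub_def]])
  show "{tens x y |x y. x \<in> P \<and> y \<in> Q} \<subseteq> l2 (I \<times> J)" using P Q tens_l2 by blast
  fix v assume "v \<in> {tens x y |x y. x \<in> P \<and> y \<in> Q}"
  then obtain x y where "v = tens x y" "x \<in> P" "y \<in> Q" by blast
  moreover have "l2_inner x a = 0 \<or> l2_inner y b = 0"
    using orth \<open>x \<in> P\<close> \<open>y \<in> Q\<close> unfolding ocomp_def by blast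
  moreover have "sq_summable x" "sq_summable y" "sq_summable a" "sq_summable b"
    using P Q a b \<open>x \<in> P\<close> \<open>y \<in> Q\<close> by (meson l2_sq_summable subsetD)+
  ultimately show "l2_inner v (tens a b) = 0"
    by (auto simp: l2_inner_tens)
qed

definition delta :: "'a \<Rightarrow> 'a \<Rightarrow> complex" where
  "delta i = (\<lambda>k. if k = i then 1 else 0)"

lemma delta_l2: "i \<in> I \<Longrightarrow> delta i \<in> l2 I"
  unfolding mem_l2_iff sq_summable_def
  by (auto intro: finite_nonzero_values_imp_summable_on simp: delta_def)

lemma l2_inner_tens_delta: "l2_inner (tens (delta i) (delta j)) q = q (i, j)"
proof -
  have "l2_inner (tens (delta i) (delta j)) q = (\<Sum>\<^sub>\<infinity>p\<in>{(i, j)}. q p)"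
    unfolding l2_inner_def by (rule infsum_cong_neutral) (auto simp: delta_def split: if_splits)
  then show ?thesis by simp
qed

lemma orth_all_tens_imp_zero:
  assumes "q \<in> l2 (I \<times> J)" and "\<And>a b. a \<in> l2 I \<Longrightarrow> b \<in> l2 J \<Longrightarrow> l2_inner (tens a b) q = 0"
  shows "q = (\<lambda>_. 0)"
proof
  fix p :: "'a \<times> 'b"
  show "q p = 0"
  proof (cases "p \<in> I \<times> J")
    case True
    then show ?thesis
      using assms(2)[OF delta_l2 delta_l2] l2_inner_tens_delta by (metis mem_Sigma_iff prod.collapse)
  next
    case False
    then show ?thesis using assms(1) by (cases p) (simp add: mem_l2_iff)
  qed
qed

lemma tensor_sub_ocomp_orth_tens:
  assumes "A \<subseteq> l2 I" "C \<subseteq> l2 J" and a: "a \<in> l2 I" and b: "b \<in> l2 J" and "a \<in> A \<or> b \<in> C"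
    and u: "u \<in> tensor_sub I J (ocomp I A) (ocomp J C)"
  shows "l2_inner (tens a b) u = 0"
proof -
  have "a \<in> ocomp I (ocomp I A) \<or> b \<in> ocomp J (ocomp J C)"
    using assms(5) ocomp_ocomp_superset[OF assms(1)] ocomp_ocomp_superset[OF assms(2)] by blast
  then have "l2_inner u (tens a b) = 0" by (rule tensor_sub_orth_tens[OF ocomp_l2 ocomp_l2 a b _ u])
  then show ?thesis by (simp add: l2_inner_eq_0_commute)
qed

lemma orth_tens_by_decomposition:
  assumes A: "closed_subspace I A" and C: "closed_subspace J C" and q: "q \<in> l2 (I \<times> J)"
    and orth: "\<And>a b. a \<in> l2 I \<Longrightarrow> b \<in> l2 J \<Longrightarrow> a \<in> A \<or> b \<in> C \<Longrightarrow> l2_inner (tens a b) q = 0"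
    and orth_ocomp: "\<And>a b. a \<in> ocomp I A \<Longrightarrow> b \<in> ocomp J C \<Longrightarrow> l2_inner (tens a b) q = 0"
    and a: "a \<in> l2 I" and b: "b \<in> l2 J"
  shows "l2_inner (tens a b) q = 0"
proof -
  obtain a1 a2 where a1: "a1 \<in> A" and a2: "a2 \<in> ocomp I A" and a_eq: "a = (\<lambda>i. a1 i + a2 i)"
    using orthogonal_decomposition_l2[OF A a] .
  obtain b1 b2 where b1: "b1 \<in> C" and b2: "b2 \<in> ocomp J C" and b_eq: "b = (\<lambda>i. b1 i + b2 i)"
    using orthogonal_decomposition_l2[OF C b] .
  have l2: "a1 \<in> l2 I" "a2 \<in> l2 I" "b1 \<in> l2 J" "b2 \<in> l2 J"
    using a1 a2 b1 b2 closed_subspace_l2D[OF A] closed_subspace_l2D[OF C] ocomp_l2 by blast+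
  note sq = sq_summable_tens[OF l2_sq_summable[OF l2(1)] l2_sq_summable[OF b]]
    sq_summable_tens[OF l2_sq_summable[OF l2(2)] l2_sq_summable[OF l2(3)]]
    sq_summable_tens[OF l2_sq_summable[OF l2(2)] l2_sq_summable[OF l2(4)]]
  have "tens a b = (\<lambda>x. (\<lambda>x. tens a1 b x + tens a2 b1 x) x + tens a2 b2 x)"
    by (auto simp: fun_eq_iff a_eq b_eq algebra_simps)
  then have "l2_inner (tens a b) q
      = l2_inner (tens a1 b) q + l2_inner (tens a2 b1) q + l2_inner (tens a2 b2) q"
    using sq l2_sq_summable[OF q] by (simp add: l2_inner_add_left sq_summable_add)
  then show ?thesis
    using orth[OF l2(1) b] orth[OF l2(2,3)] orth_ocomp[OF a2 b2] a1 b1 by simp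
qed

lemma mem_tensor_sub_ocompI:
  assumes A: "closed_subspace I A" and C: "closed_subspace J C" and w: "w \<in> l2 (I \<times> J)"
    and orth_A: "\<And>a b. a \<in> A \<Longrightarrow> b \<in> l2 J \<Longrightarrow> l2_inner (tens a b) w = 0"
    and orth_C: "\<And>a b. a \<in> l2 I \<Longrightarrow> b \<in> C \<Longrightarrow> l2_inner (tens a b) w = 0"
  shows "w \<in> tensor_sub I J (ocomp I A) (ocomp J C)"
proof -
  let ?M = "tensor_sub I J (ocomp I A) (ocomp J C)"
  have A_l2: "A \<subseteq> l2 I" and C_l2: "C \<subseteq> l2 J"
    using A C by (simp_all add: closed_subspace_l2D)
  have M: "closed_subspace (I \<times> J) ?M"
    by (intro closed_subspace_tensor_sub ocomp_l2)
  obtain p q where p: "p \<in> ?M" and q: "q \<in> ocomp (I \<times> J) ?M" and w_eq: "w = (\<lambda>i. p i + q i)"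
    using orthogonal_decomposition_l2[OF M w] .
  have p_l2: "p \<in> l2 (I \<times> J)" and q_l2: "q \<in> l2 (I \<times> J)"
    using p q M closed_subspace_l2D ocomp_l2 by blast+
  have "l2_inner (tens a b) q = 0"
    if a: "a \<in> l2 I" and b: "b \<in> l2 J" and ab: "a \<in> A \<or> b \<in> C" for a b
  proof -
    have "l2_inner (tens a b) w = 0" using ab orth_A orth_C a b by blast
    moreover have "q = (\<lambda>i. w i - p i)" using w_eq by auto
    ultimately show ?thesis
      using tensor_sub_ocomp_orth_tens[OF A_l2 C_l2 a b ab p] l2_sq_summable[OF w] l2_sq_summable[OF p_l2]
        sq_summable_tens[OF l2_sq_summable[OF a] l2_sq_summable[OF b]]
      by (simp add: l2_inner_diff_right)
  qed
  moreover have "l2_inner (tens a b) q = 0" if "a \<in> ocomp I A" "b \<in> ocomp J C" for a b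
    using q tens_mem_tensor_sub[OF ocomp_l2 ocomp_l2 that] unfolding ocomp_def by blast
  ultimately have "l2_inner (tens a b) q = 0" if "a \<in> l2 I" "b \<in> l2 J" for a b
    using orth_tens_by_decomposition[OF A C q_l2 _ _ that] by blast
  then have "q = (\<lambda>_. 0)" by (rule orth_all_tens_imp_zero[OF q_l2])
  then show ?thesis using p w_eq by simp
qed

lemma unitary_l2_mem: "unitary_l2 I J U \<Longrightarrow> f \<in> l2 I \<Longrightarrow> U f \<in> l2 J"
  unfolding unitary_l2_def by blast

lemma unitary_l2_surj: "unitary_l2 I J U \<Longrightarrow> h \<in> l2 J \<Longrightarrow> \<exists>f\<in>l2 I. U f = h"
  unfolding unitary_l2_def by (metis imageE)

lemma unitary_l2_inner:
  "unitary_l2 I J U \<Longrightarrow> f \<in> l2 I \<Longrightarrow> g \<in> l2 I \<Longrightarrow> l2_inner (U f) (U g) = l2_inner f g"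
  unfolding unitary_l2_def by blast

lemma unitary_l2_scale: "unitary_l2 I J U \<Longrightarrow> f \<in> l2 I \<Longrightarrow> U (\<lambda>i. c * f i) = (\<lambda>j. c * U f j)"
  unfolding unitary_l2_def by blast

lemma unitary_l2_zero: "unitary_l2 I J U \<Longrightarrow> U (\<lambda>_. 0) = (\<lambda>_. 0)"
  using unitary_l2_scale[OF _ l2_zero, of I J U 0] by simp

lemma inner_preserving_l2_inj:
  assumes T: "\<And>f. f \<in> l2 I \<Longrightarrow> T f \<in> l2 K"
    and inner: "\<And>f g. f \<in> l2 I \<Longrightarrow> g \<in> l2 I \<Longrightarrow> l2_inner (T f) (T g) = l2_inner f g"
    and f: "f \<in> l2 I" and g: "g \<in> l2 I"
  shows "T f = T g \<longleftrightarrow> f = g"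
proof
  assume eq: "T f = T g"
  have sq: "sq_summable f" "sq_summable g" "sq_summable (\<lambda>i. f i - g i)"
    using f g by (simp_all add: l2_sq_summable l2_diff[THEN l2_sq_summable])
  have "l2_inner (\<lambda>i. f i - g i) (\<lambda>i. f i - g i)
      = l2_inner f f - l2_inner f g - (l2_inner g f - l2_inner g g)"
    using sq by (simp add: l2_inner_diff_left l2_inner_diff_right)
  also have "\<dots> = 0"
    using inner[OF f f] inner[OF f g] inner[OF g f] inner[OF g g] eq by simp
  finally have "(\<lambda>i. f i - g i) = (\<lambda>_. 0)" by (rule l2_inner_self_eq_0D[OF sq(3)])
  then show "f = g" by (simp add: fun_eq_iff)
qed simp

lemma slice_l2: "f \<in> l2 (K \<times> I) \<Longrightarrow> (\<lambda>i. f (l, i)) \<in> l2 I"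
proof -
  assume f: "f \<in> l2 (K \<times> I)"
  have "(\<lambda>(x, y). (cmod (f (x, y)))\<^sup>2) = (\<lambda>p. (cmod (f p))\<^sup>2)"
    by (simp add: fun_eq_iff split: prod.split)
  then have "(\<lambda>(x, y). (cmod (f (x, y)))\<^sup>2) summable_on Sigma UNIV (\<lambda>_. UNIV)"
    using f by (simp add: l2_def)
  then have "(\<lambda>y. (cmod (f (l, y)))\<^sup>2) summable_on UNIV"
    by (rule summable_on_SigmaD1[of "\<lambda>x y. (cmod (f (x, y)))\<^sup>2"]) simp
  then show ?thesis using f by (auto simp: l2_def)
qed

lemma l2_inner_slices:
  assumes "sq_summable f" "sq_summable h"
  shows "l2_inner f h = (\<Sum>\<^sub>\<infinity>l. l2_inner (\<lambda>i. f (l, i)) (\<lambda>i. h (l, i)))"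
proof -
  have "(\<lambda>p. cnj (f p) * h p) summable_on Sigma UNIV (\<lambda>_. UNIV)"
    using sq_summable_inner_summable[OF assms] by simp
  from infsum_Sigma_banach[OF this] show ?thesis unfolding l2_inner_def by simp
qed

lemma slice_norm_summable:
  assumes "sq_summable f"
  shows "(\<lambda>l. \<Sum>\<^sub>\<infinity>i. (cmod (f (l, i)))\<^sup>2) summable_on UNIV"
proof -
  have "(\<lambda>(x, y). (cmod (f (x, y)))\<^sup>2) = (\<lambda>p. (cmod (f p))\<^sup>2)"
    by (simp add: fun_eq_iff split: prod.split)
  then have sum: "(\<lambda>(x, y). (cmod (f (x, y)))\<^sup>2) summable_on Sigma UNIV (\<lambda>_. UNIV)"
    using assms by (simp add: sq_summable_def)
  then have "(\<lambda>i. (cmod (f (l, i)))\<^sup>2) summable_on UNIV" for l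
    by (rule summable_on_SigmaD1[of "\<lambda>x y. (cmod (f (x, y)))\<^sup>2"]) simp
  with summable_on_SigmaD[OF sum] show ?thesis by simp
qed

lemma tens_right_apply [simp]: "tens_right U f (l, j) = U (\<lambda>i. f (l, i)) j"
  by (simp add: tens_right_def)

lemma tens_left_apply [simp]: "tens_left U f (j, l) = U (\<lambda>i. f (i, l)) j"
  by (simp add: tens_left_def)

lemma tens_right_l2:
  assumes U: "unitary_l2 I J U" and f: "f \<in> l2 (K \<times> I)"
  shows "tens_right U f \<in> l2 (K \<times> J)"
proof -
  have slice: "(\<lambda>i. f (l, i)) \<in> l2 I" for l using slice_l2[OF f] .
  have U_slice: "U (\<lambda>i. f (l, i)) \<in> l2 J" for l using unitary_l2_mem[OF U slice] .
  have "((\<lambda>j. (cmod (U (\<lambda>i. f (l, i)) j))\<^sup>2) has_sum (\<Sum>\<^sub>\<infinity>i. (cmod (f (l, i)))\<^sup>2)) UNIV" for l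
  proof -
    have "(\<Sum>\<^sub>\<infinity>j. (cmod (U (\<lambda>i. f (l, i)) j))\<^sup>2) = (\<Sum>\<^sub>\<infinity>i. (cmod (f (l, i)))\<^sup>2)"
      using unitary_l2_inner[OF U slice slice, of l l]
        l2_sq_summable[OF U_slice, of l] l2_sq_summable[OF slice, of l]
      by (simp add: l2_inner_self)
    moreover have "(\<lambda>j. (cmod (U (\<lambda>i. f (l, i)) j))\<^sup>2) summable_on UNIV"
      using U_slice by (simp add: l2_def)
    ultimately show ?thesis using has_sum_infsum by metis
  qed
  then have "(\<lambda>(l, j). (cmod (U (\<lambda>i. f (l, i)) j))\<^sup>2) summable_on Sigma UNIV (\<lambda>_. UNIV)"
    by (intro summable_on_SigmaI[OF _ slice_norm_summable[OF l2_sq_summable[OF f]]]) auto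
  moreover have "(\<lambda>(l, j). (cmod (U (\<lambda>i. f (l, i)) j))\<^sup>2) = (\<lambda>p. (cmod (tens_right U f p))\<^sup>2)"
    by (simp add: fun_eq_iff split: prod.split)
  moreover have "tens_right U f (l, j) = 0" if "(l, j) \<notin> K \<times> J" for l j
  proof (cases "l \<in> K")
    case True
    then show ?thesis using that U_slice[of l] by (simp add: mem_l2_iff)
  next
    case False
    then have "(\<lambda>i. f (l, i)) = (\<lambda>_. 0)" using f by (simp add: mem_l2_iff)
    then show ?thesis using unitary_l2_zero[OF U] by simp
  qed
  ultimately show ?thesis unfolding mem_l2_iff sq_summable_def by auto
qed

lemma l2_inner_tens_right:
  assumes U: "unitary_l2 I J U" and f: "f \<in> l2 (K \<times> I)" and h: "h \<in> l2 (K \<times> I)"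
  shows "l2_inner (tens_right U f) (tens_right U h) = l2_inner f h"
  using l2_inner_slices[OF l2_sq_summable[OF tens_right_l2[OF U f]] l2_sq_summable[OF tens_right_l2[OF U h]]]
    l2_inner_slices[OF l2_sq_summable[OF f] l2_sq_summable[OF h]]
    unitary_l2_inner[OF U slice_l2[OF f] slice_l2[OF h]]
  by simp

definition swap_coords :: "('a \<times> 'b \<Rightarrow> complex) \<Rightarrow> ('b \<times> 'a \<Rightarrow> complex)" where
  "swap_coords f = (\<lambda>p. f (prod.swap p))"

lemma swap_coords_l2: "f \<in> l2 (I \<times> K) \<Longrightarrow> swap_coords f \<in> l2 (K \<times> I)"
  using summable_on_reindex_bij_betw[of prod.swap UNIV UNIV "\<lambda>p. (cmod (f p))\<^sup>2"]
  by (auto simp: l2_def swap_coords_def)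

lemma l2_inner_swap_coords: "l2_inner (swap_coords f) (swap_coords h) = l2_inner f h"
  unfolding l2_inner_def swap_coords_def
  using infsum_reindex_bij_betw[of prod.swap UNIV UNIV "\<lambda>p. cnj (f p) * h p"] by simp

lemma tens_left_eq_swap_coords: "tens_left U f = swap_coords (tens_right U (swap_coords f))"
  by (auto simp: fun_eq_iff swap_coords_def tens_left_def tens_right_def)

lemma tens_left_l2: "unitary_l2 I J U \<Longrightarrow> f \<in> l2 (I \<times> K) \<Longrightarrow> tens_left U f \<in> l2 (J \<times> K)"
  unfolding tens_left_eq_swap_coords by (intro swap_coords_l2 tens_right_l2 swap_coords_l2)

lemma l2_inner_tens_left:
  "unitary_l2 I J U \<Longrightarrow> f \<in> l2 (I \<times> K) \<Longrightarrow> h \<in> l2 (I \<times> K) \<Longrightarrow>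
   l2_inner (tens_left U f) (tens_left U h) = l2_inner f h"
  unfolding tens_left_eq_swap_coords l2_inner_swap_coords
  using l2_inner_tens_right swap_coords_l2 l2_inner_swap_coords by metis

lemma tens_left_eq_iff:
  "unitary_l2 I J U \<Longrightarrow> f \<in> l2 (I \<times> K) \<Longrightarrow> h \<in> l2 (I \<times> K) \<Longrightarrow>
   tens_left U f = tens_left U h \<longleftrightarrow> f = h"
  by (rule inner_preserving_l2_inj[OF tens_left_l2 l2_inner_tens_left])

lemma tens_right_eq_iff:
  "unitary_l2 I J U \<Longrightarrow> f \<in> l2 (K \<times> I) \<Longrightarrow> h \<in> l2 (K \<times> I) \<Longrightarrow>
   tens_right U f = tens_right U h \<longleftrightarrow> f = h"
  by (rule inner_preserving_l2_inj[OF tens_right_l2 l2_inner_tens_right])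

lemma tens_left_tens: "unitary_l2 I J U \<Longrightarrow> g \<in> l2 I \<Longrightarrow> tens_left U (tens g b) = tens (U g) b"
  using unitary_l2_scale[of I J U g] by (auto simp: fun_eq_iff mult.commute)

lemma tens_right_tens: "unitary_l2 I J U \<Longrightarrow> h \<in> l2 I \<Longrightarrow> tens_right U (tens a h) = tens a (U h)"
  using unitary_l2_scale[of I J U h] by (auto simp: fun_eq_iff)

definition reassoc :: "('a \<times> ('b \<times> 'c) \<Rightarrow> complex) \<Rightarrow> (('a \<times> 'b) \<times> 'c \<Rightarrow> complex)" where
  "reassoc F = (\<lambda>((a, b), c). F (a, (b, c)))"

lemma reassoc_tens: "reassoc (tens x (tens y b)) = tens (tens x y) b"
  by (auto simp: fun_eq_iff reassoc_def)

lemma reassoc_eq_iff: "reassoc F = reassoc H \<longleftrightarrow> F = H"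
proof
  have inverse: "(\<lambda>(a, b, c). reassoc F ((a, b), c)) = F" for F :: "'a \<times> ('b \<times> 'c) \<Rightarrow> complex"
    by (auto simp: reassoc_def fun_eq_iff)
  show "reassoc F = reassoc H \<Longrightarrow> F = H" by (metis inverse)
qed simp

lemma product_system_unitary:
  "product_system I B \<Longrightarrow> s > 0 \<Longrightarrow> t > 0 \<Longrightarrow> unitary_l2 (I (s + t)) (I s \<times> I t) (B s t)"
  unfolding product_system_def by blast

lemma product_system_assoc:
  assumes "product_system I B" "r > 0" "s > 0" "t > 0" "f \<in> l2 (I (r + s + t))"
  shows "tens_left (B r s) (B (r + s) t f) = reassoc (tens_right (B s t) (B r (s + t) f))"
  using assms unfolding product_system_def by (auto simp: fun_eq_iff reassoc_def)

lemma product_system_tens_assoc: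
  assumes PS: "product_system I B" and pos: "r > 0" "s > 0" "t > 0"
    and G: "G \<in> l2 (I (r + s + t))" and g: "g \<in> l2 (I (r + s))" and h: "h \<in> l2 (I (s + t))"
    and x: "x \<in> l2 (I r)" and b: "b \<in> l2 (I t)"
    and Bg: "B r s g = tens x y" and Bh: "B s t h = tens y b"
  shows "B (r + s) t G = tens g b \<longleftrightarrow> B r (s + t) G = tens x h"
proof -
  have V: "unitary_l2 (I (r + s)) (I r \<times> I s) (B r s)"
    and W: "unitary_l2 (I (s + t)) (I s \<times> I t) (B s t)"
    and B1: "unitary_l2 (I (r + s + t)) (I (r + s) \<times> I t) (B (r + s) t)"
    and B2: "unitary_l2 (I (r + s + t)) (I r \<times> I (s + t)) (B r (s + t))"
    using product_system_unitary[OF PS] pos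
      product_system_unitary[OF PS _ \<open>t > 0\<close>, of "r + s"]
      product_system_unitary[OF PS \<open>r > 0\<close>, of "s + t"]
    by (simp_all add: add.assoc)
  have "tens_left (B r s) (tens g b) = reassoc (tens_right (B s t) (tens x h))"
    by (simp add: tens_left_tens[OF V g] tens_right_tens[OF W h] Bg Bh reassoc_tens)
  then have "B (r + s) t G = tens g b
      \<longleftrightarrow> reassoc (tens_right (B s t) (B r (s + t) G)) = reassoc (tens_right (B s t) (tens x h))"
    using tens_left_eq_iff[OF V unitary_l2_mem[OF B1 G] tens_l2[OF g b]]
      product_system_assoc[OF PS pos G] by simp
  also have "\<dots> \<longleftrightarrow> B r (s + t) G = tens x h"
    using tens_right_eq_iff[OF W unitary_l2_mem[OF B2 G] tens_l2[OF x h]] by (simp add: reassoc_eq_iff)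
  finally show ?thesis .
qed

lemma inclusion_subsystem_l2: "inclusion_subsystem I B F \<Longrightarrow> t > 0 \<Longrightarrow> F t \<subseteq> l2 (I t)"
  unfolding inclusion_subsystem_def closed_subspace_def by blast

lemma inclusion_subsystem_tensor_sub:
  "inclusion_subsystem I B F \<Longrightarrow> s > 0 \<Longrightarrow> t > 0 \<Longrightarrow> v \<in> F (s + t)
   \<Longrightarrow> B s t v \<in> tensor_sub (I s) (I t) (F s) (F t)"
  unfolding inclusion_subsystem_def by blast

lemma ocomp_inclusion_subsystemI:
  assumes PS: "product_system I B" and IS: "inclusion_subsystem I B F" and "p > 0" "q > 0"
    and h: "h \<in> l2 (I (p + q))" and a: "a \<in> l2 (I p)" and b: "b \<in> l2 (I q)"
    and Bh: "B p q h = tens a b"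
    and orth: "a \<in> ocomp (I p) (F p) \<or> b \<in> ocomp (I q) (F q)"
  shows "h \<in> ocomp (I (p + q)) (F (p + q))"
proof -
  have U: "unitary_l2 (I (p + q)) (I p \<times> I q) (B p q)"
    using product_system_unitary[OF PS] \<open>p > 0\<close> \<open>q > 0\<close> by blast
  have "l2_inner v h = 0" if v: "v \<in> F (p + q)" for v
  proof -
    have "l2_inner v h = l2_inner (B p q v) (tens a b)"
      using unitary_l2_inner[OF U _ h, of v] v inclusion_subsystem_l2[OF IS, of "p + q"] \<open>p > 0\<close> \<open>q > 0\<close> Bh
      by auto
    also have "\<dots> = 0"
      using inclusion_subsystem_l2[OF IS] \<open>p > 0\<close> \<open>q > 0\<close> a b orth
        inclusion_subsystem_tensor_sub[OF IS \<open>p > 0\<close> \<open>q > 0\<close> v]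
      by (intro tensor_sub_orth_tens) auto
    finally show ?thesis .
  qed
  then show ?thesis using h unfolding ocomp_def by blast
qed

section \<open>The complementary inclusion system\<close>

lemma closed_subspace_Ftilde: "closed_subspace (I t) (Ftilde I B F t)"
  unfolding Ftilde_def by (rule closed_subspace_cspan) blast

lemma Ftilde_generator:
  assumes "G \<in> l2 (I t)" "0 < r" "r < t" "x \<in> ocomp (I r) (F r)"
    "y \<in> ocomp (I (t - r)) (F (t - r))" "B r (t - r) G = tens x y"
  shows "G \<in> Ftilde I B F t"
  unfolding Ftilde_def by (rule cspan_superset[THEN subsetD]) (use assms in blast)+

lemma Fprime_l2: "z \<in> Fprime I B F t \<Longrightarrow> z \<in> l2 (I t)"
  unfolding Fprime_def ocomp_def by blast

lemma Fprime_orth_Ftilde: "z \<in> Fprime I B F t \<Longrightarrow> G \<in> Ftilde I B F t \<Longrightarrow> l2_inner G z = 0"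
  unfolding Fprime_def ocomp_def by blast

lemma Fprime_orth_tens_generator_left:
  assumes PS: "product_system I B" and IS: "inclusion_subsystem I B F"
    and "s > 0" "t > 0" and z: "z \<in> Fprime I B F (s + t)"
    and r: "0 < r" "r < s" and x: "x \<in> ocomp (I r) (F r)" and y: "y \<in> ocomp (I (s - r)) (F (s - r))"
    and g: "g \<in> l2 (I s)" and Bg: "B r (s - r) g = tens x y" and b: "b \<in> l2 (I t)"
  shows "l2_inner (tens g b) (B s t z) = 0"
proof -
  have "s - r > 0" using r by simp
  have x_l2: "x \<in> l2 (I r)" and y_l2: "y \<in> l2 (I (s - r))" using x y ocomp_l2 by blast+
  obtain h where h: "h \<in> l2 (I (s - r + t))" and Bh: "B (s - r) t h = tens y b"
    using unitary_l2_surj[OF product_system_unitary[OF PS \<open>s - r > 0\<close> \<open>t > 0\<close>] tens_l2[OF y_l2 b]]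
    by blast
  have h_orth: "h \<in> ocomp (I (s - r + t)) (F (s - r + t))"
    using ocomp_inclusion_subsystemI[OF PS IS \<open>s - r > 0\<close> \<open>t > 0\<close> h y_l2 b Bh] y by blast
  obtain G where G: "G \<in> l2 (I (s + t))" and BG: "B r (s - r + t) G = tens x h"
    using unitary_l2_surj[OF product_system_unitary[OF PS \<open>r > 0\<close>, of "s - r + t"] tens_l2[OF x_l2 h]]
      \<open>s - r > 0\<close> \<open>t > 0\<close> by auto
  have diff: "s + t - r = s - r + t" by simp
  have "G \<in> Ftilde I B F (s + t)"
    using G x h_orth BG r \<open>t > 0\<close>
    by (intro Ftilde_generator[where r=r and x=x and y=h]) (simp_all add: diff)
  moreover have "B s t G = tens g b"
    using product_system_tens_assoc[OF PS \<open>r > 0\<close> \<open>s - r > 0\<close> \<open>t > 0\<close>, where G=G and g=g and h=h and x=x and y=y and b=b]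
      G g h x_l2 b Bg Bh BG by simp
  ultimately show ?thesis
    using unitary_l2_inner[OF product_system_unitary[OF PS \<open>s > 0\<close> \<open>t > 0\<close>] G Fprime_l2[OF z]]
      Fprime_orth_Ftilde[OF z] by simp
qed

lemma Fprime_orth_tens_generator_right:
  assumes PS: "product_system I B" and IS: "inclusion_subsystem I B F"
    and "s > 0" "t > 0" and z: "z \<in> Fprime I B F (s + t)"
    and r: "0 < r" "r < t" and x: "x \<in> ocomp (I r) (F r)" and y: "y \<in> ocomp (I (t - r)) (F (t - r))"
    and g: "g \<in> l2 (I t)" and Bg: "B r (t - r) g = tens x y" and a: "a \<in> l2 (I s)"
  shows "l2_inner (tens a g) (B s t z) = 0"
proof -
  have "t - r > 0" "s + r > 0" using r \<open>s > 0\<close> by simp_all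
  have x_l2: "x \<in> l2 (I r)" and y_l2: "y \<in> l2 (I (t - r))" using x y ocomp_l2 by blast+
  obtain h where h: "h \<in> l2 (I (s + r))" and Bh: "B s r h = tens a x"
    using unitary_l2_surj[OF product_system_unitary[OF PS \<open>s > 0\<close> \<open>r > 0\<close>] tens_l2[OF a x_l2]]
    by blast
  have h_orth: "h \<in> ocomp (I (s + r)) (F (s + r))"
    using ocomp_inclusion_subsystemI[OF PS IS \<open>s > 0\<close> \<open>r > 0\<close> h a x_l2 Bh] x by blast
  obtain G where G: "G \<in> l2 (I (s + t))" and BG: "B (s + r) (t - r) G = tens h y"
    using unitary_l2_surj[OF product_system_unitary[OF PS \<open>s + r > 0\<close> \<open>t - r > 0\<close>] tens_l2[OF h y_l2]]
    by auto
  have diff: "s + t - (s + r) = t - r" by simp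
  have "G \<in> Ftilde I B F (s + t)"
    using G h_orth y BG r \<open>s + r > 0\<close>
    by (intro Ftilde_generator[where r="s + r" and x=h and y=y]) (simp_all add: diff)
  moreover have "B s t G = tens a g"
    using product_system_tens_assoc[OF PS \<open>s > 0\<close> \<open>r > 0\<close> \<open>t - r > 0\<close>, where G=G and g=h and h=g and x=a and y=x and b=y]
      G g h a y_l2 Bg Bh BG by simp
  ultimately show ?thesis
    using unitary_l2_inner[OF product_system_unitary[OF PS \<open>s > 0\<close> \<open>t > 0\<close>] G Fprime_l2[OF z]]
      Fprime_orth_Ftilde[OF z] by simp
qed

lemma Fprime_orth_tens_Ftilde_left:
  assumes PS: "product_system I B" and IS: "inclusion_subsystem I B F"
    and "s > 0" "t > 0" and z: "z \<in> Fprime I B F (s + t)"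
    and a: "a \<in> Ftilde I B F s" and b: "b \<in> l2 (I t)"
  shows "l2_inner (tens a b) (B s t z) = 0"
  using a unfolding Ftilde_def
proof (rule cspan_orth_preimage[OF bounded_linear_l2_tens_fixed_right[OF b], rotated 3])
  show "B s t z \<in> l2 (I s \<times> I t)"
    using unitary_l2_mem[OF product_system_unitary[OF PS \<open>s > 0\<close> \<open>t > 0\<close>] Fprime_l2[OF z]] .
qed (use Fprime_orth_tens_generator_left[OF PS IS \<open>s > 0\<close> \<open>t > 0\<close> z _ _ _ _ _ _ b] in blast)+

lemma Fprime_orth_tens_Ftilde_right:
  assumes PS: "product_system I B" and IS: "inclusion_subsystem I B F"
    and "s > 0" "t > 0" and z: "z \<in> Fprime I B F (s + t)"
    and a: "a \<in> l2 (I s)" and b: "b \<in> Ftilde I B F t"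
  shows "l2_inner (tens a b) (B s t z) = 0"
  using b unfolding Ftilde_def
proof (rule cspan_orth_preimage[OF bounded_linear_l2_tens_fixed_left[OF a], rotated 3])
  show "B s t z \<in> l2 (I s \<times> I t)"
    using unitary_l2_mem[OF product_system_unitary[OF PS \<open>s > 0\<close> \<open>t > 0\<close>] Fprime_l2[OF z]] .
qed (use Fprime_orth_tens_generator_right[OF PS IS \<open>s > 0\<close> \<open>t > 0\<close> z _ _ _ _ _ _ a] in blast)+

theorem mainTheorem12:
  fixes I :: "real \<Rightarrow> 'a set"
    and B :: "real \<Rightarrow> real \<Rightarrow> ('a \<Rightarrow> complex) \<Rightarrow> ('a \<times> 'a \<Rightarrow> complex)"
    and F :: "real \<Rightarrow> ('a \<Rightarrow> complex) set"
  assumes "product_system I B"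
    and "inclusion_subsystem I B F"
  shows "\<forall>s>0. \<forall>t>0. B s t ` Fprime I B F (s + t)
           \<subseteq> tensor_sub (I s) (I t) (Fprime I B F s) (Fprime I B F t)"
proof (intro allI impI image_subsetI)
  fix s t :: real and z
  assume "s > 0" "t > 0" and z: "z \<in> Fprime I B F (s + t)"
  have "B s t z \<in> l2 (I s \<times> I t)"
    using unitary_l2_mem[OF product_system_unitary[OF assms(1) \<open>s > 0\<close> \<open>t > 0\<close>] Fprime_l2[OF z]] .
  then show "B s t z \<in> tensor_sub (I s) (I t) (Fprime I B F s) (Fprime I B F t)"
    unfolding Fprime_def
    using Fprime_orth_tens_Ftilde_left[OF assms \<open>s > 0\<close> \<open>t > 0\<close> z]
      Fprime_orth_tens_Ftilde_right[OF assms \<open>s > 0\<close> \<open>t > 0\<close> z]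
    by (intro mem_tensor_sub_ocompI closed_subspace_Ftilde)
qed

end
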